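(* Let $F:\mathcal{C}\to\mathcal{D}$ be a Frobenius functor, and let $G:\mathcal{D}\to\mathcal{C}$ be both a left and a right adjoint of $F$. Let $\eta:1_{\mathcal{C}}\to GF$ be the unit of the adjunction in which $F$ is left adjoint to $G$, and $\mu:GF\to 1_{\mathcal{C}}$ the counit of the adjunction in which $G$ is left adjoint to $F$. The following are equivalent: (1) $F$ is naturally full; (2) there exists a natural transformation $\alpha:G\to G$ with $\eta_C\circ\mu_C\circ\alpha_{FC}=\mathrm{id}_{GFC}$ for all $C\in\mathcal{C}$; (3) there exists a natural transformation $\beta:F\to F$ with $\eta_C\circ\mu_C\circ G(\beta_C)=\mathrm{id}_{GFC}$ for all $C\in\mathcal{C}$; (4) there exists a natural transformation $\tilde\alpha:G\to G$ with $\tilde\alpha_{FC}\circ\eta_C\circ\mu_C=\mathrm{id}_{GFC}$ for all $C\in\mathcal{C}$; (5) there exists a natural transformation $\tilde\beta:F\to F$ with $G(\tilde\beta_C)\circ\eta_C\circ\mu_C=\mathrm{id}_{GFC}$ for all $C\in\mathcal{C}$. In this case $\eta_C\circ\mu_C$ is an isomorphism in $\mathcal{C}$ and (for $\alpha,\beta,\tilde\alpha,\tilde\beta$ as in (2)–(5)) $\alpha_{FC}=\tilde\alpha_{FC}=G(\beta_C)=G(\tilde\beta_C)$.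
   Context: A functor is Frobenius if it has a right adjoint which is also a left adjoint. For a functor $F:\mathcal{A}\to\mathcal{B}$, let $\mathcal{F}:\mathrm{Hom}_{\mathcal{A}}(\bullet,\bullet)\to\mathrm{Hom}_{\mathcal{B}}(F(\bullet),F(\bullet))$, $\mathcal{F}_{A,A'}(f)=F(f)$. $F$ is called naturally full if there is a natural transformation $\mathcal{P}:\mathrm{Hom}_{\mathcal{B}}(F(\bullet),F(\bullet))\to\mathrm{Hom}_{\mathcal{A}}(\bullet,\bullet)$ (natural in both variables) such that $F(\mathcal{P}_{A,A'}(u))=u$ for all $u:F(A)\to F(A')$. *)

theory Defs
  imports Main
begin

record ('o, 'm) category =
  Obj :: "'o set"
  Arr :: "'m set"
  src :: "'m \<Rightarrow> 'o"
  tgt :: "'m \<Rightarrow> 'o"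
  ident :: "'o \<Rightarrow> 'm"
  cmp :: "'m \<Rightarrow> 'm \<Rightarrow> 'm"   (* cmp C g f = g \<circ> f *)

definition Hom :: "('o, 'm) category \<Rightarrow> 'o \<Rightarrow> 'o \<Rightarrow> 'm set" where
  "Hom C a b = {f \<in> Arr C. src C f = a \<and> tgt C f = b}"

definition is_category :: "('o, 'm) category \<Rightarrow> bool" where
  "is_category C \<longleftrightarrow>
     (\<forall>f \<in> Arr C. src C f \<in> Obj C \<and> tgt C f \<in> Obj C) \<and>
     (\<forall>a \<in> Obj C. ident C a \<in> Hom C a a) \<and>
     (\<forall>a \<in> Obj C. \<forall>b \<in> Obj C. \<forall>c \<in> Obj C. \<forall>f \<in> Hom C a b. \<forall>g \<in> Hom C b c.
        cmp C g f \<in> Hom C a c) \<and>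
     (\<forall>a \<in> Obj C. \<forall>b \<in> Obj C. \<forall>f \<in> Hom C a b.
        cmp C f (ident C a) = f \<and> cmp C (ident C b) f = f) \<and>
     (\<forall>a \<in> Obj C. \<forall>b \<in> Obj C. \<forall>c \<in> Obj C. \<forall>d \<in> Obj C.
        \<forall>f \<in> Hom C a b. \<forall>g \<in> Hom C b c. \<forall>h \<in> Hom C c d.
        cmp C h (cmp C g f) = cmp C (cmp C h g) f)"

definition is_iso :: "('o, 'm) category \<Rightarrow> 'm \<Rightarrow> bool" where
  "is_iso C f \<longleftrightarrow> f \<in> Arr C \<and>
     (\<exists>g \<in> Hom C (tgt C f) (src C f).
        cmp C g f = ident C (src C f) \<and> cmp C f g = ident C (tgt C f))"

record ('a, 'b, 'c, 'd) functr =
  omap :: "'a \<Rightarrow> 'c"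
  fmap :: "'b \<Rightarrow> 'd"

definition is_functor ::
  "('a, 'b) category \<Rightarrow> ('c, 'd) category \<Rightarrow> ('a, 'b, 'c, 'd) functr \<Rightarrow> bool" where
  "is_functor C D F \<longleftrightarrow>
     is_category C \<and> is_category D \<and>
     (\<forall>a \<in> Obj C. omap F a \<in> Obj D) \<and>
     (\<forall>a \<in> Obj C. \<forall>b \<in> Obj C. \<forall>f \<in> Hom C a b. fmap F f \<in> Hom D (omap F a) (omap F b)) \<and>
     (\<forall>a \<in> Obj C. fmap F (ident C a) = ident D (omap F a)) \<and>
     (\<forall>a \<in> Obj C. \<forall>b \<in> Obj C. \<forall>c \<in> Obj C. \<forall>f \<in> Hom C a b. \<forall>g \<in> Hom C b c.
        fmap F (cmp C g f) = cmp D (fmap F g) (fmap F f))"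

definition id_functor :: "('a, 'b, 'a, 'b) functr" where
  "id_functor = \<lparr>omap = (\<lambda>x. x), fmap = (\<lambda>f. f)\<rparr>"

definition functor_comp ::
  "('c, 'd, 'e, 'f) functr \<Rightarrow> ('a, 'b, 'c, 'd) functr \<Rightarrow> ('a, 'b, 'e, 'f) functr" where
  "functor_comp G F = \<lparr>omap = (\<lambda>x. omap G (omap F x)), fmap = (\<lambda>f. fmap G (fmap F f))\<rparr>"

definition is_nat_trans ::
  "('a, 'b) category \<Rightarrow> ('c, 'd) category \<Rightarrow> ('a, 'b, 'c, 'd) functr \<Rightarrow>
   ('a, 'b, 'c, 'd) functr \<Rightarrow> ('a \<Rightarrow> 'd) \<Rightarrow> bool" where
  "is_nat_trans C D F G tau \<longleftrightarrow>
     is_functor C D F \<and> is_functor C D G \<and>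
     (\<forall>a \<in> Obj C. tau a \<in> Hom D (omap F a) (omap G a)) \<and>
     (\<forall>a \<in> Obj C. \<forall>b \<in> Obj C. \<forall>f \<in> Hom C a b.
        cmp D (tau b) (fmap F f) = cmp D (fmap G f) (tau a))"

definition is_adjunction ::
  "('a, 'b) category \<Rightarrow> ('c, 'd) category \<Rightarrow> ('a, 'b, 'c, 'd) functr \<Rightarrow>
   ('c, 'd, 'a, 'b) functr \<Rightarrow> ('a \<Rightarrow> 'b) \<Rightarrow> ('c \<Rightarrow> 'd) \<Rightarrow> bool" where
  "is_adjunction C D F G eta eps \<longleftrightarrow>
     is_functor C D F \<and> is_functor D C G \<and>
     is_nat_trans C C id_functor (functor_comp G F) eta \<and>
     is_nat_trans D D (functor_comp F G) id_functor eps \<and>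
     (\<forall>a \<in> Obj C. cmp D (eps (omap F a)) (fmap F (eta a)) = ident D (omap F a)) \<and>
     (\<forall>d \<in> Obj D. cmp C (fmap G (eps d)) (eta (omap G d)) = ident C (omap G d))"

text \<open>Naturally full functor: a natural (in both variables) section P of the map
  Hom_C(A,A') \<rightarrow> Hom_D(FA,FA'), f \<mapsto> F f.\<close>
definition naturally_full ::
  "('a, 'b) category \<Rightarrow> ('c, 'd) category \<Rightarrow> ('a, 'b, 'c, 'd) functr \<Rightarrow> bool" where
  "naturally_full C D F \<longleftrightarrow> is_functor C D F \<and>
     (\<exists>P :: 'a \<Rightarrow> 'a \<Rightarrow> 'd \<Rightarrow> 'b.
        (\<forall>a \<in> Obj C. \<forall>a' \<in> Obj C. \<forall>u \<in> Hom D (omap F a) (omap F a').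
           P a a' u \<in> Hom C a a' \<and> fmap F (P a a' u) = u) \<and>
        (\<forall>a \<in> Obj C. \<forall>a' \<in> Obj C. \<forall>b \<in> Obj C. \<forall>b' \<in> Obj C.
           \<forall>f \<in> Hom C b a. \<forall>g \<in> Hom C a' b'. \<forall>u \<in> Hom D (omap F a) (omap F a').
           P b b' (cmp D (cmp D (fmap F g) u) (fmap F f)) = cmp C (cmp C g (P a a' u)) f))"

end

theory Submission
  imports Defs
begin

text \<open>
  For an adjunction F -| G with unit eta and counit eps, F is naturally full iff eta has a
  natural section p : GF => 1: from a natural section P of F on hom-sets take
  p c = P (eps (F c)), and conversely put P u = p \<circ> G u \<circ> eta.  If also G -| F with
  unit nu and counit mu, such a p amounts to an alpha : G => G with
  eta \<circ> mu \<circ> alpha_F = 1 (p = mu \<circ> alpha_F, alpha = p_G \<circ> G nu) and to a beta : F => F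
  with eta \<circ> mu \<circ> G beta = 1 (p = mu \<circ> G beta, beta = F p \<circ> nu_F).  Conditions (4) and
  (5) are (2) and (3) read in the opposite categories, where the two adjunctions trade
  places and eta and mu swap roles.  Finally alpha_F and G beta are right inverses and
  alpha'_F and G beta' are left inverses of eta \<circ> mu, so eta \<circ> mu is invertible and
  all four coincide.
\<close>

lemma functor_comp_simps [simp]:
  "omap (functor_comp G F) x = omap G (omap F x)"
  "fmap (functor_comp G F) f = fmap G (fmap F f)"
  by (simp_all add: functor_comp_def)

lemma id_functor_simps [simp]:
  "omap id_functor x = x"
  "fmap id_functor f = f"
  by (simp_all add: id_functor_def)

context
  fixes C :: "('o, 'm) category"
  assumes C: "is_category C"
begin

lemma src_obj [simp]: "f \<in> Arr C \<Longrightarrow> src C f \<in> Obj C"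
  and tgt_obj [simp]: "f \<in> Arr C \<Longrightarrow> tgt C f \<in> Obj C"
  using C by (simp_all add: is_category_def)

lemma Hom_src_tgt: "f \<in> Arr C \<Longrightarrow> f \<in> Hom C (src C f) (tgt C f)"
  by (simp add: Hom_def)

lemma ident_arr [simp]: "a \<in> Obj C \<Longrightarrow> ident C a \<in> Arr C"
  and src_ident [simp]: "a \<in> Obj C \<Longrightarrow> src C (ident C a) = a"
  and tgt_ident [simp]: "a \<in> Obj C \<Longrightarrow> tgt C (ident C a) = a"
  using C by (simp_all add: is_category_def Hom_def)

lemma
  assumes f: "f \<in> Arr C" and g: "g \<in> Arr C" and gf: "src C g = tgt C f"
  shows cmp_arr [simp]: "cmp C g f \<in> Arr C"
    and src_cmp [simp]: "src C (cmp C g f) = src C f"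
    and tgt_cmp [simp]: "tgt C (cmp C g f) = tgt C g"
proof -
  have "\<forall>a \<in> Obj C. \<forall>b \<in> Obj C. \<forall>c \<in> Obj C. \<forall>f \<in> Hom C a b. \<forall>g \<in> Hom C b c.
      cmp C g f \<in> Hom C a c"
    using C unfolding is_category_def by blast
  moreover note Hom_src_tgt[OF f] Hom_src_tgt[OF g, unfolded gf]
  ultimately have "cmp C g f \<in> Hom C (src C f) (tgt C g)"
    using f g by (meson src_obj tgt_obj)
  then show "cmp C g f \<in> Arr C" "src C (cmp C g f) = src C f" "tgt C (cmp C g f) = tgt C g"
    by (simp_all add: Hom_def)
qed

lemma
  assumes f: "f \<in> Arr C"
  shows cmp_ident_left [simp]: "a = tgt C f \<Longrightarrow> cmp C (ident C a) f = f"
    and cmp_ident_right [simp]: "a = src C f \<Longrightarrow> cmp C f (ident C a) = f"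
proof -
  have "\<forall>a \<in> Obj C. \<forall>b \<in> Obj C. \<forall>f \<in> Hom C a b.
      cmp C f (ident C a) = f \<and> cmp C (ident C b) f = f"
    using C unfolding is_category_def by blast
  then have "cmp C f (ident C (src C f)) = f \<and> cmp C (ident C (tgt C f)) f = f"
    using f Hom_src_tgt[OF f] by (meson src_obj tgt_obj)
  then show "a = tgt C f \<Longrightarrow> cmp C (ident C a) f = f" "a = src C f \<Longrightarrow> cmp C f (ident C a) = f"
    by simp_all
qed

lemma cmp_assoc:
  assumes f: "f \<in> Arr C" and g: "g \<in> Arr C" and h: "h \<in> Arr C"
    and gf: "src C g = tgt C f" and hg: "src C h = tgt C g"
  shows "cmp C (cmp C h g) f = cmp C h (cmp C g f)"
proof -
  have "\<forall>a \<in> Obj C. \<forall>b \<in> Obj C. \<forall>c \<in> Obj C. \<forall>d \<in> Obj C.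
      \<forall>f \<in> Hom C a b. \<forall>g \<in> Hom C b c. \<forall>h \<in> Hom C c d.
        cmp C h (cmp C g f) = cmp C (cmp C h g) f"
    using C unfolding is_category_def by blast
  moreover note Hom_src_tgt[OF f] Hom_src_tgt[OF g, unfolded gf]
    Hom_src_tgt[OF h, unfolded hg]
  ultimately show ?thesis
    using f g h by (metis src_obj tgt_obj)
qed

text \<open>Rewrites with an equation between composites inside right-associated composites,
  the normal form produced by simplifying with cmp_assoc.\<close>

lemma cmp_eq_precomp:
  assumes eq: "cmp C g f = cmp C k h"
    and f: "f \<in> Arr C" and g: "g \<in> Arr C" and h: "h \<in> Arr C" and k: "k \<in> Arr C"
    and gf: "src C g = tgt C f" and kh: "src C k = tgt C h"
    and y: "y \<in> Arr C" "tgt C y = src C f"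
  shows "cmp C g (cmp C f y) = cmp C k (cmp C h y)"
proof -
  have "src C h = src C f"
    using eq f g h k gf kh by (metis src_cmp)
  then show ?thesis
    using eq f g h k gf kh y by (metis cmp_assoc)
qed

lemma left_inverse_eq_right_inverse:
  assumes f: "f \<in> Hom C a b" and l: "l \<in> Hom C b a" and r: "r \<in> Hom C b a"
    and left: "cmp C l f = ident C a" and right: "cmp C f r = ident C b"
  shows "l = r"
proof -
  have "l = cmp C l (cmp C f r)"
    using right l by (simp add: Hom_def)
  also have "\<dots> = cmp C (cmp C l f) r"
    using f l r by (simp add: Hom_def cmp_assoc)
  also have "\<dots> = r"
    using left r by (simp add: Hom_def)
  finally show ?thesis .
qed

end

lemma is_isoI:
  assumes "f \<in> Hom C a b" "g \<in> Hom C b a" "cmp C g f = ident C a" "cmp C f g = ident C b"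
  shows "is_iso C f"
  using assms unfolding is_iso_def Hom_def by auto

context
  fixes C :: "('a, 'b) category" and D :: "('c, 'd) category"
    and F :: "('a, 'b, 'c, 'd) functr"
  assumes F: "is_functor C D F"
begin

lemma is_functor_dom: "is_category C"
  and is_functor_cod: "is_category D"
  using F by (simp_all add: is_functor_def)

lemma omap_obj [simp]: "a \<in> Obj C \<Longrightarrow> omap F a \<in> Obj D"
  using F by (simp add: is_functor_def)

lemma
  assumes f: "f \<in> Arr C"
  shows fmap_arr [simp]: "fmap F f \<in> Arr D"
    and src_fmap [simp]: "src D (fmap F f) = omap F (src C f)"
    and tgt_fmap [simp]: "tgt D (fmap F f) = omap F (tgt C f)"
proof -
  have "\<forall>a \<in> Obj C. \<forall>b \<in> Obj C. \<forall>f \<in> Hom C a b. fmap F f \<in> Hom D (omap F a) (omap F b)"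
    using F unfolding is_functor_def by blast
  then have "fmap F f \<in> Hom D (omap F (src C f)) (omap F (tgt C f))"
    using f Hom_src_tgt[OF is_functor_dom f] by (meson is_functor_dom src_obj tgt_obj)
  then show "fmap F f \<in> Arr D" "src D (fmap F f) = omap F (src C f)"
      "tgt D (fmap F f) = omap F (tgt C f)"
    by (simp_all add: Hom_def)
qed

lemma fmap_ident [simp]: "a \<in> Obj C \<Longrightarrow> fmap F (ident C a) = ident D (omap F a)"
  using F by (simp add: is_functor_def)

lemma fmap_cmp [simp]:
  assumes f: "f \<in> Arr C" and g: "g \<in> Arr C" and gf: "src C g = tgt C f"
  shows "fmap F (cmp C g f) = cmp D (fmap F g) (fmap F f)"
proof -
  have "\<forall>a \<in> Obj C. \<forall>b \<in> Obj C. \<forall>c \<in> Obj C. \<forall>f \<in> Hom C a b. \<forall>g \<in> Hom C b c.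
      fmap F (cmp C g f) = cmp D (fmap F g) (fmap F f)"
    using F unfolding is_functor_def by blast
  moreover note Hom_src_tgt[OF is_functor_dom f] Hom_src_tgt[OF is_functor_dom g, unfolded gf]
  ultimately show ?thesis
    using f g by (meson is_functor_dom src_obj tgt_obj)
qed

end

context
  fixes C :: "('a, 'b) category" and D :: "('c, 'd) category"
    and F G :: "('a, 'b, 'c, 'd) functr" and tau :: "'a \<Rightarrow> 'd"
  assumes tau: "is_nat_trans C D F G tau"
begin

lemma component_arr [simp]: "a \<in> Obj C \<Longrightarrow> tau a \<in> Arr D"
  and src_component [simp]: "a \<in> Obj C \<Longrightarrow> src D (tau a) = omap F a"
  and tgt_component [simp]: "a \<in> Obj C \<Longrightarrow> tgt D (tau a) = omap G a"
  using tau by (simp_all add: is_nat_trans_def Hom_def)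

lemma naturality:
  "f \<in> Arr C \<Longrightarrow> cmp D (tau (tgt C f)) (fmap F f) = cmp D (fmap G f) (tau (src C f))"
  using tau is_functor_dom[of C D F] unfolding is_nat_trans_def Hom_def by simp

end

lemma is_nat_transI:
  assumes "is_functor C D F" "is_functor C D G"
    and "\<And>a. a \<in> Obj C \<Longrightarrow> tau a \<in> Arr D \<and> src D (tau a) = omap F a \<and> tgt D (tau a) = omap G a"
    and "\<And>f. f \<in> Arr C \<Longrightarrow>
      cmp D (tau (tgt C f)) (fmap F f) = cmp D (fmap G f) (tau (src C f))"
  shows "is_nat_trans C D F G tau"
  using assms unfolding is_nat_trans_def Hom_def by auto

definition op_cat :: "('o, 'm) category \<Rightarrow> ('o, 'm) category" where
  "op_cat C = C\<lparr>src := tgt C, tgt := src C, cmp := \<lambda>g f. cmp C f g\<rparr>"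

lemma op_cat_simps [simp]:
  "Obj (op_cat C) = Obj C" "Arr (op_cat C) = Arr C" "ident (op_cat C) = ident C"
  "src (op_cat C) = tgt C" "tgt (op_cat C) = src C" "cmp (op_cat C) g f = cmp C f g"
  by (simp_all add: op_cat_def)

lemma op_cat_op_cat [simp]: "op_cat (op_cat C) = C"
  by (simp add: op_cat_def)

lemma Hom_op_cat [simp]: "Hom (op_cat C) a b = Hom C b a"
  by (auto simp: Hom_def)

lemma is_category_op_cat: "is_category C \<Longrightarrow> is_category (op_cat C)"
  unfolding is_category_def by simp

lemma is_functor_op_cat: "is_functor C D F \<Longrightarrow> is_functor (op_cat C) (op_cat D) F"
  unfolding is_functor_def by (simp add: is_category_op_cat)

lemma is_nat_trans_op_cat:
  "is_nat_trans C D F G tau \<Longrightarrow> is_nat_trans (op_cat C) (op_cat D) G F tau"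
  unfolding is_nat_trans_def by (simp add: is_functor_op_cat)

lemma is_nat_trans_op_cat_iff [simp]:
  "is_nat_trans (op_cat C) (op_cat D) G F tau \<longleftrightarrow> is_nat_trans C D F G tau"
  using is_nat_trans_op_cat[of C D F G tau] is_nat_trans_op_cat[of "op_cat C" "op_cat D" G F tau]
  by auto

lemma is_adjunction_op_cat:
  "is_adjunction C D F G eta eps \<Longrightarrow> is_adjunction (op_cat D) (op_cat C) G F eps eta"
  unfolding is_adjunction_def by (simp add: is_functor_op_cat)

lemma naturally_full_op_cat:
  assumes "naturally_full C D F"
  shows "naturally_full (op_cat C) (op_cat D) F"
proof -
  have F: "is_functor C D F"
    using assms by (simp add: naturally_full_def)
  note C = is_functor_dom[OF F] and D = is_functor_cod[OF F]
  obtain P where P_hom: "\<forall>a \<in> Obj C. \<forall>a' \<in> Obj C. \<forall>u \<in> Hom D (omap F a) (omap F a').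
        P a a' u \<in> Hom C a a' \<and> fmap F (P a a' u) = u"
    and P_nat: "\<forall>a \<in> Obj C. \<forall>a' \<in> Obj C. \<forall>b \<in> Obj C. \<forall>b' \<in> Obj C.
        \<forall>f \<in> Hom C b a. \<forall>g \<in> Hom C a' b'. \<forall>u \<in> Hom D (omap F a) (omap F a').
          P b b' (cmp D (cmp D (fmap F g) u) (fmap F f)) = cmp C (cmp C g (P a a' u)) f"
    using assms unfolding naturally_full_def by blast
  have "P b' b (cmp D (fmap F f) (cmp D u (fmap F g))) = cmp C f (cmp C (P a' a u) g)"
    if "a \<in> Obj C" "a' \<in> Obj C" "b \<in> Obj C" "b' \<in> Obj C"
      and f: "f \<in> Hom C a b" and g: "g \<in> Hom C b' a'" and u: "u \<in> Hom D (omap F a') (omap F a)"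
    for a a' b b' f g u
  proof -
    have "P b' b (cmp D (cmp D (fmap F f) u) (fmap F g)) = cmp C (cmp C f (P a' a u)) g"
      using P_nat that by blast
    moreover have "P a' a u \<in> Hom C a' a"
      using P_hom that by blast
    ultimately show ?thesis
      using f g u C D F by (simp add: Hom_def cmp_assoc)
  qed
  then show ?thesis
    using P_hom F unfolding naturally_full_def
    by (intro conjI is_functor_op_cat exI[of _ "\<lambda>a a'. P a' a"]) auto
qed

lemma naturally_full_op_cat_iff [simp]:
  "naturally_full (op_cat C) (op_cat D) F \<longleftrightarrow> naturally_full C D F"
  using naturally_full_op_cat[of C D F] naturally_full_op_cat[of "op_cat C" "op_cat D" F]
  by auto

definition nat_section ::
  "('a, 'b) category \<Rightarrow> ('c, 'd) category \<Rightarrow> ('a, 'b, 'c, 'd) functr \<Rightarrow>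
   ('a, 'b, 'c, 'd) functr \<Rightarrow> ('a \<Rightarrow> 'd) \<Rightarrow> ('a \<Rightarrow> 'd) \<Rightarrow> bool" where
  "nat_section C D H K tau sigma \<longleftrightarrow> is_nat_trans C D K H sigma \<and>
     (\<forall>a \<in> Obj C. cmp D (tau a) (sigma a) = ident D (omap K a))"

definition nat_retraction ::
  "('a, 'b) category \<Rightarrow> ('c, 'd) category \<Rightarrow> ('a, 'b, 'c, 'd) functr \<Rightarrow>
   ('a, 'b, 'c, 'd) functr \<Rightarrow> ('a \<Rightarrow> 'd) \<Rightarrow> ('a \<Rightarrow> 'd) \<Rightarrow> bool" where
  "nat_retraction C D H K tau rho \<longleftrightarrow> is_nat_trans C D K H rho \<and>
     (\<forall>a \<in> Obj C. cmp D (rho a) (tau a) = ident D (omap H a))"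

lemma nat_section_op_cat_iff [simp]:
  "nat_section (op_cat C) (op_cat D) K H tau sigma \<longleftrightarrow> nat_retraction C D H K tau sigma"
  by (simp add: nat_section_def nat_retraction_def)

locale adjunction =
  fixes C :: "('a, 'b) category" and D :: "('c, 'd) category"
    and F :: "('a, 'b, 'c, 'd) functr" and G :: "('c, 'd, 'a, 'b) functr"
    and eta :: "'a \<Rightarrow> 'b" and eps :: "'c \<Rightarrow> 'd"
  assumes adjunction: "is_adjunction C D F G eta eps"
begin

lemma is_functor_F: "is_functor C D F"
  and is_functor_G: "is_functor D C G"
  and unit_nat: "is_nat_trans C C id_functor (functor_comp G F) eta"
  and counit_nat: "is_nat_trans D D (functor_comp F G) id_functor eps"
  and triangle_F: "c \<in> Obj C \<Longrightarrow> cmp D (eps (omap F c)) (fmap F (eta c)) = ident D (omap F c)"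
  and triangle_G: "d \<in> Obj D \<Longrightarrow> cmp C (fmap G (eps d)) (eta (omap G d)) = ident C (omap G d)"
  using adjunction by (simp_all add: is_adjunction_def)

lemma is_functor_GF: "is_functor C C (functor_comp G F)"
  and is_functor_id: "is_functor C C id_functor"
  using unit_nat by (simp_all add: is_nat_trans_def)

lemmas cat_C = is_functor_dom[OF is_functor_F] and cat_D = is_functor_cod[OF is_functor_F]

lemmas [simp] =
  src_obj[OF cat_C] tgt_obj[OF cat_C] ident_arr[OF cat_C] src_ident[OF cat_C] tgt_ident[OF cat_C]
  cmp_arr[OF cat_C] src_cmp[OF cat_C] tgt_cmp[OF cat_C] cmp_ident_left[OF cat_C] cmp_ident_right[OF cat_C]
  src_obj[OF cat_D] tgt_obj[OF cat_D] ident_arr[OF cat_D] src_ident[OF cat_D] tgt_ident[OF cat_D]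
  cmp_arr[OF cat_D] src_cmp[OF cat_D] tgt_cmp[OF cat_D] cmp_ident_left[OF cat_D] cmp_ident_right[OF cat_D]
  omap_obj[OF is_functor_F] fmap_arr[OF is_functor_F] src_fmap[OF is_functor_F]
  tgt_fmap[OF is_functor_F] fmap_ident[OF is_functor_F] fmap_cmp[OF is_functor_F]
  omap_obj[OF is_functor_G] fmap_arr[OF is_functor_G] src_fmap[OF is_functor_G]
  tgt_fmap[OF is_functor_G] fmap_ident[OF is_functor_G] fmap_cmp[OF is_functor_G]
  component_arr[OF unit_nat] src_component[OF unit_nat] tgt_component[OF unit_nat]
  component_arr[OF counit_nat] src_component[OF counit_nat] tgt_component[OF counit_nat]

lemma unit_naturality:
  "f \<in> Arr C \<Longrightarrow> cmp C (eta (tgt C f)) f = cmp C (fmap G (fmap F f)) (eta (src C f))"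
  using naturality[OF unit_nat] by simp

lemma counit_naturality:
  "g \<in> Arr D \<Longrightarrow> cmp D (eps (tgt D g)) (fmap F (fmap G g)) = cmp D g (eps (src D g))"
  using naturality[OF counit_nat] by simp

lemma counit_transpose:
  assumes v: "v \<in> Arr D" "src D v = omap F c" and c: "c \<in> Obj C"
  shows "cmp D (eps (tgt D v)) (fmap F (cmp C (fmap G v) (eta c))) = v"
proof -
  have "cmp D (eps (tgt D v)) (fmap F (cmp C (fmap G v) (eta c)))
      = cmp D (cmp D (eps (tgt D v)) (fmap F (fmap G v))) (fmap F (eta c))"
    using v c by (simp add: cmp_assoc[OF cat_D])
  also have "\<dots> = cmp D (cmp D v (eps (omap F c))) (fmap F (eta c))"
    using counit_naturality[OF v(1)] v by simp
  also have "\<dots> = v"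
    using v c triangle_F by (simp add: cmp_assoc[OF cat_D])
  finally show ?thesis .
qed

lemma fmap_unit_section_eq_counit:
  assumes p: "nat_section C C id_functor (functor_comp G F) eta p" and c: "c \<in> Obj C"
  shows "fmap F (p c) = eps (omap F c)"
proof -
  have p_nat: "is_nat_trans C C (functor_comp G F) id_functor p"
    and p_section: "cmp C (eta c) (p c) = ident C (omap G (omap F c))"
    using p c by (simp_all add: nat_section_def)
  note [simp] = component_arr[OF p_nat] src_component[OF p_nat] tgt_component[OF p_nat]
  have "cmp C (fmap G (fmap F (p c))) (eta (omap G (omap F c))) = ident C (omap G (omap F c))"
    using unit_naturality[of "p c"] c p_section by simp
  then show ?thesis
    using counit_transpose[of "fmap F (p c)" "omap G (omap F c)"] c by simp
qed

lemma naturally_full_if_unit_section: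
  assumes p: "nat_section C C id_functor (functor_comp G F) eta p"
  shows "naturally_full C D F"
proof -
  have p_nat: "is_nat_trans C C (functor_comp G F) id_functor p"
    using p by (simp add: nat_section_def)
  note [simp] = component_arr[OF p_nat] src_component[OF p_nat] tgt_component[OF p_nat]
  define P where "P a a' u = cmp C (p a') (cmp C (fmap G u) (eta a))" for a a' u
  have "P a a' u \<in> Hom C a a' \<and> fmap F (P a a' u) = u"
    if "a \<in> Obj C" "a' \<in> Obj C" "u \<in> Hom D (omap F a) (omap F a')" for a a' u
    using that counit_transpose[of u a] fmap_unit_section_eq_counit[OF p]
    by (simp add: P_def Hom_def cmp_assoc[OF cat_D])
  moreover have "P b b' (cmp D (cmp D (fmap F g) u) (fmap F f)) = cmp C (cmp C g (P a a' u)) f"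
    if "a \<in> Obj C" "a' \<in> Obj C" "b \<in> Obj C" "b' \<in> Obj C"
      and f: "f \<in> Hom C b a" and g: "g \<in> Hom C a' b'" and u: "u \<in> Hom D (omap F a) (omap F a')"
    for a a' b b' f g u
  proof -
    have p_g: "cmp C (p b') (fmap G (fmap F g)) = cmp C g (p a')"
      using naturality[OF p_nat, of g] g by (simp add: Hom_def)
    have eta_f: "cmp C (fmap G (fmap F f)) (eta b) = cmp C (eta a) f"
      using unit_naturality[of f] f by (simp add: Hom_def)
    show ?thesis
      using that unfolding P_def Hom_def
      by (simp add: cmp_assoc[OF cat_C] cmp_eq_precomp[OF cat_C p_g] eta_f)
  qed
  ultimately show ?thesis
    unfolding naturally_full_def using is_functor_F by blast
qed

lemma unit_section_if_naturally_full:
  assumes "naturally_full C D F"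
  obtains p where "nat_section C C id_functor (functor_comp G F) eta p"
proof -
  obtain P where P_hom: "\<forall>a \<in> Obj C. \<forall>a' \<in> Obj C. \<forall>u \<in> Hom D (omap F a) (omap F a').
        P a a' u \<in> Hom C a a' \<and> fmap F (P a a' u) = u"
    and P_nat: "\<forall>a \<in> Obj C. \<forall>a' \<in> Obj C. \<forall>b \<in> Obj C. \<forall>b' \<in> Obj C.
        \<forall>f \<in> Hom C b a. \<forall>g \<in> Hom C a' b'. \<forall>u \<in> Hom D (omap F a) (omap F a').
          P b b' (cmp D (cmp D (fmap F g) u) (fmap F f)) = cmp C (cmp C g (P a a' u)) f"
    using assms unfolding naturally_full_def by blast
  define p where "p c = P (omap G (omap F c)) c (eps (omap F c))" for c
  have p: "p c \<in> Arr C \<and> src C (p c) = omap G (omap F c) \<and> tgt C (p c) = c \<and>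
      fmap F (p c) = eps (omap F c)" if c: "c \<in> Obj C" for c
    using P_hom c unfolding p_def by (simp add: Hom_def)
  have "is_nat_trans C C (functor_comp G F) id_functor p"
  proof (rule is_nat_transI[OF is_functor_GF is_functor_id])
    fix f assume f: "f \<in> Arr C"
    let ?a = "src C f" and ?b = "tgt C f"
    \<comment> \<open>naturality of P in each variable, applied to the two sides of the counit square at F f\<close>
    have "P (omap G (omap F ?a)) ?b (cmp D (cmp D (fmap F f) (eps (omap F ?a)))
          (fmap F (ident C (omap G (omap F ?a)))))
        = cmp C (cmp C f (p ?a)) (ident C (omap G (omap F ?a)))"
      unfolding p_def by (rule P_nat[rule_format]) (use f in \<open>simp_all add: Hom_def\<close>)
    moreover have "P (omap G (omap F ?a)) ?b (cmp D (cmp D (fmap F (ident C ?b)) (eps (omap F ?b)))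
          (fmap F (fmap G (fmap F f))))
        = cmp C (cmp C (ident C ?b) (p ?b)) (fmap G (fmap F f))"
      unfolding p_def by (rule P_nat[rule_format]) (use f in \<open>simp_all add: Hom_def\<close>)
    moreover have "cmp D (eps (omap F ?b)) (fmap F (fmap G (fmap F f)))
        = cmp D (fmap F f) (eps (omap F ?a))"
      using counit_naturality[of "fmap F f"] f by simp
    ultimately show "cmp C (p ?b) (fmap (functor_comp G F) f) = cmp C (fmap id_functor f) (p ?a)"
      using f p by simp
  qed (use p in simp)
  moreover have "cmp C (eta c) (p c) = ident C (omap G (omap F c))" if c: "c \<in> Obj C" for c
    using unit_naturality[of "p c"] p[OF c] triangle_G[of "omap F c"] c by simp
  ultimately show thesis
    using that by (auto simp: nat_section_def)
qed

lemma naturally_full_iff_unit_section: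
  "naturally_full C D F \<longleftrightarrow> (\<exists>p. nat_section C C id_functor (functor_comp G F) eta p)"
  using naturally_full_if_unit_section unit_section_if_naturally_full by metis

lemma naturally_full_right_adjoint_iff_counit_retraction:
  "naturally_full D C G \<longleftrightarrow> (\<exists>q. nat_retraction D D (functor_comp F G) id_functor eps q)"
proof -
  interpret dual: adjunction "op_cat D" "op_cat C" G F eps eta
    using is_adjunction_op_cat[OF adjunction] by unfold_locales
  show ?thesis
    using dual.naturally_full_iff_unit_section by simp
qed

end

locale frobenius_pair =
  FG: adjunction C D F G eta eps + GF: adjunction D C G F nu mu
  for C :: "('a, 'b) category" and D :: "('c, 'd) category"
    and F :: "('a, 'b, 'c, 'd) functr" and G :: "('c, 'd, 'a, 'b) functr"
    and eta :: "'a \<Rightarrow> 'b" and eps :: "'c \<Rightarrow> 'd" and nu :: "'c \<Rightarrow> 'd" and mu :: "'a \<Rightarrow> 'b"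
begin

lemmas cmp_assoc_C = cmp_assoc[OF FG.cat_C] and cmp_assoc_D = cmp_assoc[OF FG.cat_D]
lemmas cmp_eq_precomp_C = cmp_eq_precomp[OF FG.cat_C]
  and cmp_eq_precomp_D = cmp_eq_precomp[OF FG.cat_D]

lemma unit_section_of_G_endo:
  assumes alpha: "is_nat_trans D C G G alpha"
    and inv: "\<forall>c \<in> Obj C. cmp C (cmp C (eta c) (mu c)) (alpha (omap F c)) = ident C (omap G (omap F c))"
  shows "nat_section C C id_functor (functor_comp G F) eta (\<lambda>c. cmp C (mu c) (alpha (omap F c)))"
proof -
  note [simp] = component_arr[OF alpha] src_component[OF alpha] tgt_component[OF alpha]
  have "is_nat_trans C C (functor_comp G F) id_functor (\<lambda>c. cmp C (mu c) (alpha (omap F c)))"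
  proof (rule is_nat_transI[OF FG.is_functor_GF FG.is_functor_id])
    fix f assume f: "f \<in> Arr C"
    have alpha_Ff: "cmp C (alpha (omap F (tgt C f))) (fmap G (fmap F f))
        = cmp C (fmap G (fmap F f)) (alpha (omap F (src C f)))"
      using naturality[OF alpha, of "fmap F f"] f by simp
    show "cmp C (cmp C (mu (tgt C f)) (alpha (omap F (tgt C f)))) (fmap (functor_comp G F) f)
        = cmp C (fmap id_functor f) (cmp C (mu (src C f)) (alpha (omap F (src C f))))"
      using f
      by (simp add: cmp_assoc_C alpha_Ff cmp_eq_precomp_C[OF GF.counit_naturality[OF f]])
  qed simp
  moreover have "\<forall>c \<in> Obj C. cmp C (eta c) (cmp C (mu c) (alpha (omap F c))) = ident C (omap G (omap F c))"
    using inv by (simp add: cmp_assoc_C)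
  ultimately show ?thesis
    by (simp add: nat_section_def)
qed

lemma G_endo_of_unit_section:
  assumes p: "nat_section C C id_functor (functor_comp G F) eta p"
  shows "is_nat_trans D C G G (\<lambda>d. cmp C (p (omap G d)) (fmap G (nu d)))"
    and "c \<in> Obj C \<Longrightarrow> cmp C (cmp C (eta c) (mu c)) (cmp C (p (omap G (omap F c))) (fmap G (nu (omap F c))))
      = ident C (omap G (omap F c))"
proof -
  have p_nat: "is_nat_trans C C (functor_comp G F) id_functor p"
    and p_section: "\<And>c. c \<in> Obj C \<Longrightarrow> cmp C (eta c) (p c) = ident C (omap G (omap F c))"
    using p by (simp_all add: nat_section_def)
  note [simp] = component_arr[OF p_nat] src_component[OF p_nat] tgt_component[OF p_nat]
  show "is_nat_trans D C G G (\<lambda>d. cmp C (p (omap G d)) (fmap G (nu d)))"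
  proof (rule is_nat_transI[OF FG.is_functor_G FG.is_functor_G])
    fix h assume h: "h \<in> Arr D"
    have G_nu_h: "cmp C (fmap G (nu (tgt D h))) (fmap G h)
        = cmp C (fmap G (fmap F (fmap G h))) (fmap G (nu (src D h)))"
      using arg_cong[OF GF.unit_naturality[OF h], of "fmap G"] h by simp
    have p_Gh: "cmp C (p (omap G (tgt D h))) (fmap G (fmap F (fmap G h)))
        = cmp C (fmap G h) (p (omap G (src D h)))"
      using naturality[OF p_nat, of "fmap G h"] h by simp
    show "cmp C (cmp C (p (omap G (tgt D h))) (fmap G (nu (tgt D h)))) (fmap G h)
        = cmp C (fmap G h) (cmp C (p (omap G (src D h))) (fmap G (nu (src D h))))"
      using h by (simp add: cmp_assoc_C G_nu_h cmp_eq_precomp_C[OF p_Gh])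
  qed simp
  assume c: "c \<in> Obj C"
  have mu_p: "cmp C (mu c) (p (omap G (omap F c))) = cmp C (p c) (fmap G (fmap F (mu c)))"
    using naturality[OF p_nat, of "mu c"] c by simp
  have "cmp C (fmap G (fmap F (mu c))) (fmap G (nu (omap F c))) = ident C (omap G (omap F c))"
    using arg_cong[OF GF.triangle_G[OF c], of "fmap G"] c by simp
  then show "cmp C (cmp C (eta c) (mu c)) (cmp C (p (omap G (omap F c))) (fmap G (nu (omap F c))))
      = ident C (omap G (omap F c))"
    using c p_section[OF c] by (simp add: cmp_assoc_C cmp_eq_precomp_C[OF mu_p])
qed

lemma unit_section_of_F_endo:
  assumes beta: "is_nat_trans C D F F beta"
    and inv: "\<forall>c \<in> Obj C. cmp C (cmp C (eta c) (mu c)) (fmap G (beta c)) = ident C (omap G (omap F c))"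
  shows "nat_section C C id_functor (functor_comp G F) eta (\<lambda>c. cmp C (mu c) (fmap G (beta c)))"
proof -
  note [simp] = component_arr[OF beta] src_component[OF beta] tgt_component[OF beta]
  have "is_nat_trans C C (functor_comp G F) id_functor (\<lambda>c. cmp C (mu c) (fmap G (beta c)))"
  proof (rule is_nat_transI[OF FG.is_functor_GF FG.is_functor_id])
    fix f assume f: "f \<in> Arr C"
    have G_beta_f: "cmp C (fmap G (beta (tgt C f))) (fmap G (fmap F f))
        = cmp C (fmap G (fmap F f)) (fmap G (beta (src C f)))"
      using arg_cong[OF naturality[OF beta f], of "fmap G"] f by simp
    show "cmp C (cmp C (mu (tgt C f)) (fmap G (beta (tgt C f)))) (fmap (functor_comp G F) f)
        = cmp C (fmap id_functor f) (cmp C (mu (src C f)) (fmap G (beta (src C f))))"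
      using f
      by (simp add: cmp_assoc_C G_beta_f cmp_eq_precomp_C[OF GF.counit_naturality[OF f]])
  qed simp
  moreover have "\<forall>c \<in> Obj C. cmp C (eta c) (cmp C (mu c) (fmap G (beta c))) = ident C (omap G (omap F c))"
    using inv by (simp add: cmp_assoc_C)
  ultimately show ?thesis
    by (simp add: nat_section_def)
qed

lemma F_endo_of_unit_section:
  assumes p: "nat_section C C id_functor (functor_comp G F) eta p"
  shows "is_nat_trans C D F F (\<lambda>c. cmp D (fmap F (p c)) (nu (omap F c)))"
    and "c \<in> Obj C \<Longrightarrow> cmp C (cmp C (eta c) (mu c)) (fmap G (cmp D (fmap F (p c)) (nu (omap F c))))
      = ident C (omap G (omap F c))"
proof -
  have p_nat: "is_nat_trans C C (functor_comp G F) id_functor p"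
    and p_section: "\<And>c. c \<in> Obj C \<Longrightarrow> cmp C (eta c) (p c) = ident C (omap G (omap F c))"
    using p by (simp_all add: nat_section_def)
  note [simp] = component_arr[OF p_nat] src_component[OF p_nat] tgt_component[OF p_nat]
  show "is_nat_trans C D F F (\<lambda>c. cmp D (fmap F (p c)) (nu (omap F c)))"
  proof (rule is_nat_transI[OF FG.is_functor_F FG.is_functor_F])
    fix f assume f: "f \<in> Arr C"
    have nu_Ff: "cmp D (nu (omap F (tgt C f))) (fmap F f)
        = cmp D (fmap F (fmap G (fmap F f))) (nu (omap F (src C f)))"
      using GF.unit_naturality[of "fmap F f"] f by simp
    have F_p_f: "cmp D (fmap F (p (tgt C f))) (fmap F (fmap G (fmap F f)))
        = cmp D (fmap F f) (fmap F (p (src C f)))"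
      using arg_cong[OF naturality[OF p_nat f], of "fmap F"] f by simp
    show "cmp D (cmp D (fmap F (p (tgt C f))) (nu (omap F (tgt C f)))) (fmap F f)
        = cmp D (fmap F f) (cmp D (fmap F (p (src C f))) (nu (omap F (src C f))))"
      using f by (simp add: cmp_assoc_D nu_Ff cmp_eq_precomp_D[OF F_p_f])
  qed simp
  assume c: "c \<in> Obj C"
  have mu_GFp: "cmp C (mu c) (fmap G (fmap F (p c))) = cmp C (p c) (mu (omap G (omap F c)))"
    using GF.counit_naturality[of "p c"] c by simp
  have "cmp C (mu (omap G (omap F c))) (fmap G (nu (omap F c))) = ident C (omap G (omap F c))"
    using GF.triangle_F[of "omap F c"] c by simp
  then show "cmp C (cmp C (eta c) (mu c)) (fmap G (cmp D (fmap F (p c)) (nu (omap F c))))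
      = ident C (omap G (omap F c))"
    using c p_section[OF c] by (simp add: cmp_assoc_C cmp_eq_precomp_C[OF mu_GFp])
qed

lemma ex_unit_section_iff_G_endo:
  "(\<exists>p. nat_section C C id_functor (functor_comp G F) eta p) \<longleftrightarrow>
   (\<exists>alpha. is_nat_trans D C G G alpha \<and>
      (\<forall>c \<in> Obj C. cmp C (cmp C (eta c) (mu c)) (alpha (omap F c)) = ident C (omap G (omap F c))))"
proof
  assume "\<exists>p. nat_section C C id_functor (functor_comp G F) eta p"
  then obtain p where p: "nat_section C C id_functor (functor_comp G F) eta p" ..
  show "\<exists>alpha. is_nat_trans D C G G alpha \<and>
      (\<forall>c \<in> Obj C. cmp C (cmp C (eta c) (mu c)) (alpha (omap F c)) = ident C (omap G (omap F c)))"
    using G_endo_of_unit_section[OF p]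
    by (intro exI[of _ "\<lambda>d. cmp C (p (omap G d)) (fmap G (nu d))"]) simp
qed (use unit_section_of_G_endo in blast)

lemma ex_unit_section_iff_F_endo:
  "(\<exists>p. nat_section C C id_functor (functor_comp G F) eta p) \<longleftrightarrow>
   (\<exists>beta. is_nat_trans C D F F beta \<and>
      (\<forall>c \<in> Obj C. cmp C (cmp C (eta c) (mu c)) (fmap G (beta c)) = ident C (omap G (omap F c))))"
proof
  assume "\<exists>p. nat_section C C id_functor (functor_comp G F) eta p"
  then obtain p where p: "nat_section C C id_functor (functor_comp G F) eta p" ..
  show "\<exists>beta. is_nat_trans C D F F beta \<and>
      (\<forall>c \<in> Obj C. cmp C (cmp C (eta c) (mu c)) (fmap G (beta c)) = ident C (omap G (omap F c)))"
    using F_endo_of_unit_section[OF p]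
    by (intro exI[of _ "\<lambda>c. cmp D (fmap F (p c)) (nu (omap F c))"]) simp
qed (use unit_section_of_F_endo in blast)

lemma frobenius_pair_op_cat: "frobenius_pair (op_cat C) (op_cat D) F G mu nu eps eta"
  using is_adjunction_op_cat[OF GF.adjunction] is_adjunction_op_cat[OF FG.adjunction]
  by (simp add: frobenius_pair_def adjunction_def)

lemma ex_counit_retraction_iff_G_endo:
  "(\<exists>q. nat_retraction C C (functor_comp G F) id_functor mu q) \<longleftrightarrow>
   (\<exists>alpha. is_nat_trans D C G G alpha \<and>
      (\<forall>c \<in> Obj C. cmp C (alpha (omap F c)) (cmp C (eta c) (mu c)) = ident C (omap G (omap F c))))"
  using frobenius_pair.ex_unit_section_iff_G_endo[OF frobenius_pair_op_cat] by simp

lemma ex_counit_retraction_iff_F_endo: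
  "(\<exists>q. nat_retraction C C (functor_comp G F) id_functor mu q) \<longleftrightarrow>
   (\<exists>beta. is_nat_trans C D F F beta \<and>
      (\<forall>c \<in> Obj C. cmp C (fmap G (beta c)) (cmp C (eta c) (mu c)) = ident C (omap G (omap F c))))"
  using frobenius_pair.ex_unit_section_iff_F_endo[OF frobenius_pair_op_cat] by simp

lemma endo_components_Hom:
  "is_nat_trans D C G G alpha \<Longrightarrow> c \<in> Obj C \<Longrightarrow>
    alpha (omap F c) \<in> Hom C (omap G (omap F c)) (omap G (omap F c))"
  "is_nat_trans C D F F beta \<Longrightarrow> c \<in> Obj C \<Longrightarrow>
    fmap G (beta c) \<in> Hom C (omap G (omap F c)) (omap G (omap F c))"
  by (simp_all add: Hom_def)

lemma
  assumes c: "c \<in> Obj C"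
    and l: "l \<in> Hom C (omap G (omap F c)) (omap G (omap F c))"
    and r: "r \<in> Hom C (omap G (omap F c)) (omap G (omap F c))"
    and left: "cmp C l (cmp C (eta c) (mu c)) = ident C (omap G (omap F c))"
    and right: "cmp C (cmp C (eta c) (mu c)) r = ident C (omap G (omap F c))"
  shows unit_counit_left_inverse_eq_right_inverse: "l = r"
    and is_iso_unit_counit: "is_iso C (cmp C (eta c) (mu c))"
proof -
  have eta_mu: "cmp C (eta c) (mu c) \<in> Hom C (omap G (omap F c)) (omap G (omap F c))"
    using c by (simp add: Hom_def)
  show "l = r"
    using left_inverse_eq_right_inverse[OF FG.cat_C eta_mu l r left right] .
  then show "is_iso C (cmp C (eta c) (mu c))"
    using is_isoI[OF eta_mu r] left right by simp
qed

end

theorem proposition2p7: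
  fixes C :: "('a, 'b) category" and D :: "('c, 'd) category"
    and F :: "('a, 'b, 'c, 'd) functr" and G :: "('c, 'd, 'a, 'b) functr"
    and eta :: "'a \<Rightarrow> 'b" and eps :: "'c \<Rightarrow> 'd"
    and nu :: "'c \<Rightarrow> 'd" and mu :: "'a \<Rightarrow> 'b"
  assumes FG: "is_adjunction C D F G eta eps"
    and GF: "is_adjunction D C G F nu mu"
  defines "cond2 \<equiv> \<lambda>alpha. is_nat_trans D C G G alpha \<and>
             (\<forall>c \<in> Obj C. cmp C (cmp C (eta c) (mu c)) (alpha (omap F c))
                            = ident C (omap G (omap F c)))"
    and "cond3 \<equiv> \<lambda>beta. is_nat_trans C D F F beta \<and>
             (\<forall>c \<in> Obj C. cmp C (cmp C (eta c) (mu c)) (fmap G (beta c))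
                            = ident C (omap G (omap F c)))"
    and "cond4 \<equiv> \<lambda>alpha'. is_nat_trans D C G G alpha' \<and>
             (\<forall>c \<in> Obj C. cmp C (alpha' (omap F c)) (cmp C (eta c) (mu c))
                            = ident C (omap G (omap F c)))"
    and "cond5 \<equiv> \<lambda>beta'. is_nat_trans C D F F beta' \<and>
             (\<forall>c \<in> Obj C. cmp C (fmap G (beta' c)) (cmp C (eta c) (mu c))
                            = ident C (omap G (omap F c)))"
  shows "(naturally_full C D F \<longleftrightarrow> (\<exists>alpha. cond2 alpha)) \<and>
         (naturally_full C D F \<longleftrightarrow> (\<exists>beta. cond3 beta)) \<and>
         (naturally_full C D F \<longleftrightarrow> (\<exists>alpha'. cond4 alpha')) \<and>
         (naturally_full C D F \<longleftrightarrow> (\<exists>beta'. cond5 beta')) \<and>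
         (naturally_full C D F \<longrightarrow>
            (\<forall>c \<in> Obj C. is_iso C (cmp C (eta c) (mu c))) \<and>
            (\<forall>alpha beta alpha' beta'.
               cond2 alpha \<and> cond3 beta \<and> cond4 alpha' \<and> cond5 beta' \<longrightarrow>
               (\<forall>c \<in> Obj C. alpha (omap F c) = alpha' (omap F c) \<and>
                             alpha' (omap F c) = fmap G (beta c) \<and>
                             fmap G (beta c) = fmap G (beta' c))))"
proof -
  interpret frobenius_pair C D F G eta eps nu mu
    using FG GF by (simp add: frobenius_pair_def adjunction_def)
  have nf2: "naturally_full C D F \<longleftrightarrow> (\<exists>alpha. cond2 alpha)"
    unfolding cond2_def FG.naturally_full_iff_unit_section ex_unit_section_iff_G_endo ..
  have nf3: "naturally_full C D F \<longleftrightarrow> (\<exists>beta. cond3 beta)"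
    unfolding cond3_def FG.naturally_full_iff_unit_section ex_unit_section_iff_F_endo ..
  have nf4: "naturally_full C D F \<longleftrightarrow> (\<exists>alpha'. cond4 alpha')"
    unfolding cond4_def GF.naturally_full_right_adjoint_iff_counit_retraction
      ex_counit_retraction_iff_G_endo ..
  have nf5: "naturally_full C D F \<longleftrightarrow> (\<exists>beta'. cond5 beta')"
    unfolding cond5_def GF.naturally_full_right_adjoint_iff_counit_retraction
      ex_counit_retraction_iff_F_endo ..
  have "is_iso C (cmp C (eta c) (mu c))" if nf: "naturally_full C D F" and c: "c \<in> Obj C" for c
  proof -
    obtain alpha alpha' where "cond2 alpha" "cond4 alpha'"
      using nf nf2 nf4 by blast
    then show ?thesis
      using c unfolding cond2_def cond4_def
      by (meson endo_components_Hom is_iso_unit_counit)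
  qed
  moreover have "alpha (omap F c) = alpha' (omap F c) \<and> alpha' (omap F c) = fmap G (beta c) \<and>
      fmap G (beta c) = fmap G (beta' c)"
    if "cond2 alpha" "cond3 beta" "cond4 alpha'" "cond5 beta'" "c \<in> Obj C" for alpha beta alpha' beta' c
    using that unfolding cond2_def cond3_def cond4_def cond5_def
    by (metis endo_components_Hom unit_counit_left_inverse_eq_right_inverse)
  ultimately show ?thesis
    using nf2 nf3 nf4 nf5 by blast
qed

end
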